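(* Under Assumptions 1, 2 and 3, let $\lambda_1,\lambda_2>0$, let $(\hat S,\hat L)$ be as in the context and $\Delta L=L^*-\hat L$. Then, with probability at least $1-2e^{-\tilde\nu_n\gamma_n sn}$, $$\Big|\big\langle \Omega\odot(A-\hat S-\hat S^\top)_{|O}\,\big|\,\Delta L\big\rangle\Big|\le 16\,\tilde\nu_n\gamma_n\rho_n ns,$$ where $\langle M|N\rangle=\sum_{i,j}M_{ij}N_{ij}$.
   Context: Let $n\ge2$ and let $[n]=\mathcal I\sqcup\mathcal O$ be a partition into inliers $\mathcal I$ and outliers $\mathcal O$, $s=|\mathcal O|$. Write $I=\mathcal I\times\mathcal I$ and $O=([n]\times[n])\setminus I$. For $M\in\mathbb R^{n\times n}$ and $\mathcal S\subset[n]\times[n]$, $M_{|\mathcal S}=\mathbb 1_{\mathcal S}\odot M$ ($\odot$ entrywise product, $\mathbb 1_{\mathcal S}$ indicator matrix). Let $\rho_n\in(0,1/2]$, $\gamma_n\in(0,1]$, $k\ge1$. $L^*$ is a symmetric $n\times n$ matrix of rank $k$ with entries in $[0,\rho_n]$ and $L^*_{ij}=0$ whenever $i\in\mathcal O$ or $j\in\mathcal O$. $S^*$ is an $n\times n$ matrix with entries in $[0,\gamma_n]$, zero diagonal, $S^*_{\cdot,j}=0$ for all $j\in\mathcal I$, and $L^*+S^*+(S^* )^\top$ has entries in $[0,1]$. The adjacency matrix $A$ is symmetric with zero diagonal and $(A_{ij})_{i<j}$ are independent, $A_{ij}\sim\mathrm{Bernoulli}((L^*+S^*+(S^* )^\top)_{ij})$.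 The sampling matrix $\Omega$ is symmetric with zero diagonal, $(\Omega_{ij})_{i<j}$ are independent $\mathrm{Bernoulli}(\Pi_{ij})$, $\Omega$ independent of $A$, $\Pi=\mathbb E[\Omega]$. Norms: $\|M\|_{2,1}=\sum_j(\sum_iM_{ij}^2)^{1/2}$, $\|\cdot\|_F$ Frobenius, $\|\cdot\|_*$ nuclear. Assumption 1: there is $\mu_n>0$ with $\Pi_{ij}\ge\mu_n$ for all $(i,j)\in I$, $i\neq j$; and $\nu_n,\tilde\nu_n\in(0,1]$ satisfy $\sum_{j\in\mathcal I}\Pi_{ij}\le\nu_n n$ for all $i\in\mathcal I$ and $\sum_{j\in\mathcal O}\Pi_{ij}\le\tilde\nu_n s$ for all $i\in[n]$. Assumption 2: $\nu_n\rho_n\ge\log(n)/n$ and $\tilde\nu_n\gamma_n\ge\log(n)/n$. Assumption 3: $\nu_n\rho_n n\ge\tilde\nu_n\gamma_n s$. Estimator: for $\lambda_1,\lambda_2>0$, $\mathcal F(S,L)=\frac12\|\Omega\odot(A-L-S-S^\top)\|_F^2+\lambda_1\|L\|_*+\lambda_2\|S\|_{2,1}$; $(\hat S,\hat L)$ is any minimizer of $\mathcal F$ over $S\in[0,1]^{n\times n}$ and symmetric $L\in[0,\rho_n]^{n\times n}$, and (standing assumption that the upper box constraint on $S$ is inactive) $\hat S$ also minimizes $S\mapsto\mathcal F(S,\hat L)$ over nonnegative $S\in\mathbb R_+^{n\times n}$. *)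

theory Defs
  imports "HOL-Analysis.Analysis" "HOL-Probability.Probability"
begin

definition diag_mat :: "('n::finite \<Rightarrow> real) \<Rightarrow> real^'n^'n" where
  "diag_mat \<sigma> = (\<chi> i j. if i = j then \<sigma> i else 0)"

text \<open>Nuclear norm = sum of the singular values, read off from a singular value decomposition
  M = U diag(sigma) V^T with U, V orthogonal and sigma nonnegative (the sum is independent of the SVD).\<close>
definition nuclear_norm :: "real^'n^'n \<Rightarrow> real" where
  "nuclear_norm M = (SOME t. \<exists>U V \<sigma>. orthogonal_matrix U \<and> orthogonal_matrix V \<and>
      (\<forall>i. \<sigma> i \<ge> 0) \<and> M = U ** diag_mat \<sigma> ** transpose V \<and> t = (\<Sum>i\<in>UNIV. \<sigma> i))"

definition norm21 :: "real^'n^'n \<Rightarrow> real" where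
  "norm21 M = (\<Sum>j\<in>UNIV. sqrt (\<Sum>i\<in>UNIV. (M$i$j)^2))"

definition frob_inner :: "real^'n^'n \<Rightarrow> real^'n^'n \<Rightarrow> real" where
  "frob_inner M N = (\<Sum>i\<in>UNIV. \<Sum>j\<in>UNIV. M$i$j * N$i$j)"

definition sym_bern :: "((real, 'n::{finite,linorder}) vec, 'n) vec \<Rightarrow> ((real, 'n) vec, 'n) vec pmf" where
  "sym_bern P = map_pmf
     (\<lambda>f. \<chi> i j. if i < j then of_bool (f (i,j)) else if j < i then of_bool (f (j,i)) else 0)
     (Pi_pmf {(i,j). i < j} False (\<lambda>(i,j). bernoulli_pmf (P$i$j)))"

definition objF :: "real \<Rightarrow> real \<Rightarrow> real^'n::finite^'n \<Rightarrow> real^'n^'n \<Rightarrow> real^'n^'n \<Rightarrow> real^'n^'n \<Rightarrow> real" where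
  "objF lam1 lam2 A \<Omega> S L =
     (1/2) * (\<Sum>i\<in>UNIV. \<Sum>j\<in>UNIV. (\<Omega>$i$j * (A$i$j - L$i$j - S$i$j - S$j$i))^2)
     + lam1 * nuclear_norm L + lam2 * norm21 S"

definition feasible_S :: "real^'n::finite^'n \<Rightarrow> bool" where
  "feasible_S S \<longleftrightarrow> (\<forall>i j. 0 \<le> S$i$j \<and> S$i$j \<le> 1)"

definition feasible_L :: "real \<Rightarrow> real^'n::finite^'n \<Rightarrow> bool" where
  "feasible_L \<rho> L \<longleftrightarrow> transpose L = L \<and> (\<forall>i j. 0 \<le> L$i$j \<and> L$i$j \<le> \<rho>)"

text \<open>(Shat, Lhat) minimises F over the box constraints, and (standing assumption)
  Shat also minimises S \<mapsto> F(S, Lhat) over all entrywise nonnegative S.\<close>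
definition is_estimator ::
  "real \<Rightarrow> real \<Rightarrow> real \<Rightarrow> real^'n::finite^'n \<Rightarrow> real^'n^'n \<Rightarrow> real^'n^'n \<Rightarrow> real^'n^'n \<Rightarrow> bool" where
  "is_estimator lam1 lam2 \<rho> A \<Omega> Sh Lh \<longleftrightarrow>
     feasible_S Sh \<and> feasible_L \<rho> Lh \<and>
     (\<forall>S L. feasible_S S \<longrightarrow> feasible_L \<rho> L \<longrightarrow>
        objF lam1 lam2 A \<Omega> Sh Lh \<le> objF lam1 lam2 A \<Omega> S L) \<and>
     (\<forall>S. (\<forall>i j. 0 \<le> S$i$j) \<longrightarrow> objF lam1 lam2 A \<Omega> Sh Lh \<le> objF lam1 lam2 A \<Omega> S Lh)"

end

theory Submission
  imports Defs
begin

text \<open>On the outlier part \<open>L*\<close> vanishes, and \<open>L*\<close> and \<open>Lh\<close> both take values in \<open>[0, \<rho>]\<close>, so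
  \<open>\<bar>L* - Lh\<bar> \<le> \<rho>\<close> entrywise. Optimality of \<open>Sh\<close> among nonnegative matrices forces the residual
  \<open>A - Lh - Sh - Sh\<^sup>T\<close> to be nonnegative at every observed pair where \<open>Sh\<close> is positive: otherwise
  shrinking that entry of \<open>Sh\<close> lowers both the quadratic fit and the \<open>(2,1)\<close>-norm penalty. Hence
  \<open>0 \<le> A - Sh - Sh\<^sup>T \<le> A\<close> on observed entries, and the inner product is at most \<open>2\<rho>\<close> times the
  number of observed edges touching an outlier. That number has mean at most \<open>4\<nu>t\<gamma>ns\<close>, and a
  Chernoff bound keeps it below \<open>8\<nu>t\<gamma>ns\<close> except with probability \<open>exp(-\<nu>t\<gamma>sn)\<close>.\<close>

lemma symmetric_matrix_entry: "transpose M = M \<Longrightarrow> M$i$j = M$j$i"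
  by (metis transpose_def vec_lambda_beta)

lemma sum_sum_eq_sum_pairs:
  fixes f :: "'a::finite \<Rightarrow> 'b::finite \<Rightarrow> 'c::comm_monoid_add"
  shows "(\<Sum>a\<in>UNIV. \<Sum>b\<in>UNIV. f a b) = (\<Sum>p\<in>UNIV. f (fst p) (snd p))"
  by (simp add: sum.cartesian_product case_prod_unfold UNIV_Times_UNIV[symmetric] del: UNIV_Times_UNIV)

lemma sum_sum_eq_except_two:
  fixes f g :: "'a::finite \<Rightarrow> 'a \<Rightarrow> real"
  assumes "i \<noteq> j" and "\<And>a b. (a, b) \<noteq> (i, j) \<Longrightarrow> (a, b) \<noteq> (j, i) \<Longrightarrow> f a b = g a b"
  shows "(\<Sum>a\<in>UNIV. \<Sum>b\<in>UNIV. f a b)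
       = (\<Sum>a\<in>UNIV. \<Sum>b\<in>UNIV. g a b) + (f i j - g i j) + (f j i - g j i)"
proof -
  have "f (fst p) (snd p) - g (fst p) (snd p)
      = (if p = (i, j) then f i j - g i j else 0) + (if p = (j, i) then f j i - g j i else 0)" for p
    using assms by (cases p) auto
  then have "(\<Sum>p\<in>UNIV. f (fst p) (snd p) - g (fst p) (snd p)) = (f i j - g i j) + (f j i - g j i)"
    by (simp add: sum.distrib)
  then show ?thesis
    by (simp add: sum_sum_eq_sum_pairs sum_subtractf)
qed

lemma norm21_mono:
  assumes "\<And>i j. \<bar>S$i$j\<bar> \<le> \<bar>T$i$j\<bar>"
  shows "norm21 S \<le> norm21 T"
  unfolding norm21_def
proof (intro sum_mono real_sqrt_le_mono)
  fix i j
  show "(S$i$j)\<^sup>2 \<le> (T$i$j)\<^sup>2"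
    using power_mono[OF assms abs_ge_zero, of i j 2] by simp
qed

lemma abs_frob_inner_le:
  fixes M N :: "real^'n::finite^'n"
  assumes "\<forall>i j. \<bar>M$i$j\<bar> \<le> B i j" and "\<forall>i j. \<bar>N$i$j\<bar> \<le> c"
  shows "\<bar>frob_inner M N\<bar> \<le> c * (\<Sum>i\<in>UNIV. \<Sum>j\<in>UNIV. B i j)"
proof -
  have "\<bar>M$i$j * N$i$j\<bar> \<le> c * B i j" for i j
    unfolding abs_mult mult.commute[of c]
    using assms by (intro mult_mono) (auto intro: order.trans[OF abs_ge_zero])
  then have "\<bar>frob_inner M N\<bar> \<le> (\<Sum>i\<in>UNIV. \<Sum>j\<in>UNIV. c * B i j)"
    unfolding frob_inner_def by (intro order.trans[OF sum_abs] sum_mono order.trans[OF sum_abs])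
  then show ?thesis by (simp add: sum_distrib_left)
qed

lemma objF_shrink_entry:
  fixes A \<Omega> S L :: "real^'n::finite^'n" and t :: real
  assumes symA: "transpose A = A" and sym\<Omega>: "transpose \<Omega> = \<Omega>" and symL: "transpose L = L"
    and ij: "i \<noteq> j" and observed: "\<Omega>$i$j = 1"
  defines "R \<equiv> A$i$j - L$i$j - S$i$j - S$j$i"
    and "S' \<equiv> \<chi> a b. if (a, b) = (i, j) then S$i$j - t else S$a$b"
  shows "objF lam1 lam2 A \<Omega> S' L
       = objF lam1 lam2 A \<Omega> S L + ((R + t)\<^sup>2 - R\<^sup>2) + lam2 * (norm21 S' - norm21 S)"
proof -
  define sq_res where "sq_res X a b = (\<Omega>$a$b * (A$a$b - L$a$b - X$a$b - X$b$a))\<^sup>2"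
    for X :: "real^'n^'n" and a b
  have swap: "A$j$i = A$i$j" "\<Omega>$j$i = 1" "L$j$i = L$i$j"
    using symmetric_matrix_entry[OF symA] symmetric_matrix_entry[OF sym\<Omega>]
      symmetric_matrix_entry[OF symL] observed by metis+
  have res: "sq_res S' i j = (R + t)\<^sup>2" "sq_res S i j = R\<^sup>2"
    "sq_res S' j i = (R + t)\<^sup>2" "sq_res S j i = R\<^sup>2"
    using ij observed unfolding sq_res_def S'_def R_def swap by (auto simp: algebra_simps)
  have "(\<Sum>a\<in>UNIV. \<Sum>b\<in>UNIV. sq_res S' a b) = (\<Sum>a\<in>UNIV. \<Sum>b\<in>UNIV. sq_res S a b)
      + (sq_res S' i j - sq_res S i j) + (sq_res S' j i - sq_res S j i)"
  proof (rule sum_sum_eq_except_two[OF ij])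
    fix a b
    assume "(a, b) \<noteq> (i, j)" "(a, b) \<noteq> (j, i)"
    then have "S'$a$b = S$a$b" "S'$b$a = S$b$a" unfolding S'_def by auto
    then show "sq_res S' a b = sq_res S a b" unfolding sq_res_def by simp
  qed
  then have "(\<Sum>a\<in>UNIV. \<Sum>b\<in>UNIV. sq_res S' a b)
      = (\<Sum>a\<in>UNIV. \<Sum>b\<in>UNIV. sq_res S a b) + 2 * ((R + t)\<^sup>2 - R\<^sup>2)"
    unfolding res by simp
  moreover have "objF lam1 lam2 A \<Omega> X L
      = (1/2) * (\<Sum>a\<in>UNIV. \<Sum>b\<in>UNIV. sq_res X a b) + lam1 * nuclear_norm L + lam2 * norm21 X" for X
    unfolding objF_def sq_res_def ..
  ultimately show ?thesis by (simp add: algebra_simps)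
qed

lemma estimator_residual_nonneg:
  fixes A \<Omega> Sh Lh :: "real^'n::finite^'n"
  assumes est: "is_estimator lam1 lam2 \<rho> A \<Omega> Sh Lh" and lam2: "lam2 > 0"
    and symA: "transpose A = A" and sym\<Omega>: "transpose \<Omega> = \<Omega>"
    and ij: "i \<noteq> j" and observed: "\<Omega>$i$j = 1" and pos: "Sh$i$j > 0"
  shows "0 \<le> A$i$j - Lh$i$j - Sh$i$j - Sh$j$i"
proof (rule ccontr)
  define R where "R = A$i$j - Lh$i$j - Sh$i$j - Sh$j$i"
  assume "\<not> 0 \<le> A$i$j - Lh$i$j - Sh$i$j - Sh$j$i"
  then have R_neg: "R < 0" unfolding R_def by simp
  from est have Sh_nonneg: "\<And>a b. 0 \<le> Sh$a$b" and symL: "transpose Lh = Lh"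
    and opt: "\<And>S. \<forall>a b. 0 \<le> S$a$b \<Longrightarrow> objF lam1 lam2 A \<Omega> Sh Lh \<le> objF lam1 lam2 A \<Omega> S Lh"
    unfolding is_estimator_def feasible_S_def feasible_L_def by auto
  text \<open>\<open>t \<le> -R\<close> keeps the residual \<open>R + t\<close> nonpositive, so its square drops; \<open>t \<le> Sh$i$j\<close> keeps
    the shrunk matrix nonnegative.\<close>
  define t where "t = min (Sh$i$j) (-R)"
  have t: "0 < t" "t \<le> Sh$i$j" "t \<le> -R" using pos R_neg unfolding t_def by auto
  define S' where "S' = (\<chi> a b. if (a, b) = (i, j) then Sh$i$j - t else Sh$a$b)"
  have S'_nonneg: "\<forall>a b. 0 \<le> S'$a$b" using t Sh_nonneg unfolding S'_def by auto
  have "(R + t)\<^sup>2 - R\<^sup>2 < 0"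
  proof -
    have "(R + t)\<^sup>2 - R\<^sup>2 = t * (2 * R + t)" by (simp add: power2_eq_square algebra_simps)
    then show ?thesis using t by (simp add: mult_pos_neg)
  qed
  moreover have "lam2 * (norm21 S' - norm21 Sh) \<le> 0"
    using lam2 norm21_mono[of S' Sh] t Sh_nonneg
    by (intro mult_nonneg_nonpos) (auto simp: S'_def)
  moreover have "objF lam1 lam2 A \<Omega> S' Lh
      = objF lam1 lam2 A \<Omega> Sh Lh + ((R + t)\<^sup>2 - R\<^sup>2) + lam2 * (norm21 S' - norm21 Sh)"
    unfolding R_def S'_def by (rule objF_shrink_entry[OF symA sym\<Omega> symL ij observed])
  ultimately have "objF lam1 lam2 A \<Omega> S' Lh < objF lam1 lam2 A \<Omega> Sh Lh" by linarith
  with opt[OF S'_nonneg] show False by simp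
qed

lemma estimator_observed_residual_bound:
  fixes A \<Omega> Sh Lh :: "real^'n::finite^'n"
  assumes est: "is_estimator lam1 lam2 \<rho> A \<Omega> Sh Lh" and lam2: "lam2 > 0"
    and symA: "transpose A = A" and sym\<Omega>: "transpose \<Omega> = \<Omega>"
    and A_nonneg: "\<forall>a b. 0 \<le> A$a$b" and \<Omega>_01: "\<forall>a b. \<Omega>$a$b \<in> {0, 1}"
    and \<Omega>_diag: "\<forall>a. \<Omega>$a$a = 0"
  shows "\<bar>\<Omega>$i$j * (A$i$j - Sh$i$j - Sh$j$i)\<bar> \<le> \<Omega>$i$j * A$i$j"
proof (cases "\<Omega>$i$j = 1")
  case False
  then have "\<Omega>$i$j = 0" using \<Omega>_01 by auto
  then show ?thesis by simp
next
  case observed: True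
  have ij: "i \<noteq> j" using observed \<Omega>_diag by auto
  from est have Sh_nonneg: "0 \<le> Sh$a$b" and Lh_nonneg: "0 \<le> Lh$a$b" for a b
    unfolding is_estimator_def feasible_S_def feasible_L_def by auto
  have "0 \<le> A$i$j - Sh$i$j - Sh$j$i"
  proof (cases "Sh$i$j > 0 \<or> Sh$j$i > 0")
    case True
    have "0 \<le> A$i$j - Lh$i$j - Sh$i$j - Sh$j$i"
    proof (cases "Sh$i$j > 0")
      case True
      then show ?thesis using estimator_residual_nonneg[OF est lam2 symA sym\<Omega> ij observed] by blast
    next
      case False
      with \<open>Sh$i$j > 0 \<or> Sh$j$i > 0\<close> have "Sh$j$i > 0" by simp
      moreover have "\<Omega>$j$i = 1" using observed symmetric_matrix_entry[OF sym\<Omega>] by metis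
      moreover have "A$j$i = A$i$j" "Lh$j$i = Lh$i$j"
        using symmetric_matrix_entry[OF symA] symmetric_matrix_entry[of Lh] est
        unfolding is_estimator_def feasible_L_def by metis+
      ultimately show ?thesis
        using estimator_residual_nonneg[OF est lam2 symA sym\<Omega> ij[symmetric]] by auto
    qed
    then show ?thesis using Lh_nonneg[of i j] by linarith
  next
    case False
    then show ?thesis using Sh_nonneg[of i j] Sh_nonneg[of j i] A_nonneg[rule_format, of i j] by linarith
  qed
  then show ?thesis using observed Sh_nonneg[of i j] Sh_nonneg[of j i] by simp
qed

lemma estimator_outlier_inner_le:
  fixes A \<Omega> Sh Lh Lstar :: "real^'n::finite^'n" and I :: "'n set"
  assumes est: "is_estimator lam1 lam2 \<rho> A \<Omega> Sh Lh" and lam2: "lam2 > 0"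
    and symA: "transpose A = A" and sym\<Omega>: "transpose \<Omega> = \<Omega>"
    and A_nonneg: "\<forall>a b. 0 \<le> A$a$b" and \<Omega>_01: "\<forall>a b. \<Omega>$a$b \<in> {0, 1}"
    and \<Omega>_diag: "\<forall>a. \<Omega>$a$a = 0"
    and Lstar_range: "\<forall>i j. 0 \<le> Lstar$i$j \<and> Lstar$i$j \<le> \<rho>"
  shows "\<bar>frob_inner (\<chi> i j. if i \<in> I \<and> j \<in> I then 0 else \<Omega>$i$j * (A$i$j - Sh$i$j - Sh$j$i))
            (Lstar - Lh)\<bar>
         \<le> \<rho> * (\<Sum>i\<in>UNIV. \<Sum>j\<in>UNIV. if i \<in> I \<and> j \<in> I then 0 else \<Omega>$i$j * A$i$j)"
proof (rule abs_frob_inner_le)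
  show "\<forall>i j. \<bar>(\<chi> i j. if i \<in> I \<and> j \<in> I then 0 else \<Omega>$i$j * (A$i$j - Sh$i$j - Sh$j$i))$i$j\<bar>
      \<le> (if i \<in> I \<and> j \<in> I then 0 else \<Omega>$i$j * A$i$j)"
    using estimator_observed_residual_bound[OF assms(1-7)] by simp
  show "\<forall>i j. \<bar>(Lstar - Lh)$i$j\<bar> \<le> \<rho>"
  proof (intro allI)
    fix i j
    have "0 \<le> Lh$i$j \<and> Lh$i$j \<le> \<rho>" using est unfolding is_estimator_def feasible_L_def by blast
    then show "\<bar>(Lstar - Lh)$i$j\<bar> \<le> \<rho>" using Lstar_range[rule_format, of i j] by (auto simp: abs_le_iff)
  qed
qed

definition sym_of_pairs :: "('n::{finite,linorder} \<times> 'n \<Rightarrow> bool) \<Rightarrow> ((real, 'n) vec, 'n) vec" where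
  "sym_of_pairs f = (\<chi> i j. if i < j then of_bool (f (i, j)) else if j < i then of_bool (f (j, i)) else 0)"

lemma sym_of_pairs_entries:
  shows "transpose (sym_of_pairs f) = sym_of_pairs f"
    and "sym_of_pairs f $i$j \<in> {0, 1}"
    and "sym_of_pairs f $i$i = 0"
proof -
  have "sym_of_pairs f $a$b = sym_of_pairs f $b$a" for a b
    unfolding sym_of_pairs_def by (cases a b rule: linorder_cases) auto
  then show "transpose (sym_of_pairs f) = sym_of_pairs f"
    by (simp add: vec_eq_iff transpose_def)
qed (simp_all add: sym_of_pairs_def)

lemma sum_outlier_entries_sym_of_pairs:
  fixes f g :: "'n::{finite,linorder} \<times> 'n \<Rightarrow> bool" and I :: "'n set"
  shows "(\<Sum>a\<in>UNIV. \<Sum>b\<in>UNIV. if a \<in> I \<and> b \<in> I then 0 else sym_of_pairs g$a$b * sym_of_pairs f$a$b)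
       = 2 * (\<Sum>p\<in>{(i, j). i < j \<and> \<not> (i \<in> I \<and> j \<in> I)}. of_bool (f p \<and> g p))"
proof -
  define Q where "Q = {(i, j). i < j \<and> \<not> (i \<in> I \<and> j \<in> I)}"
  define c where "c p = (if p \<in> Q then of_bool (f p \<and> g p) else 0 :: real)" for p
  have split: "(if a \<in> I \<and> b \<in> I then 0 else sym_of_pairs g$a$b * sym_of_pairs f$a$b) = c (a, b) + c (b, a)"
    for a b
    unfolding sym_of_pairs_def c_def Q_def by (cases a b rule: linorder_cases) auto
  have "(\<Sum>a\<in>UNIV. \<Sum>b\<in>UNIV. c (a, b)) = (\<Sum>p\<in>Q. of_bool (f p \<and> g p))"
    unfolding sum_sum_eq_sum_pairs c_def by (simp add: sum.inter_restrict[symmetric])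
  moreover have "(\<Sum>a\<in>UNIV. \<Sum>b\<in>UNIV. c (b, a)) = (\<Sum>a\<in>UNIV. \<Sum>b\<in>UNIV. c (a, b))"
    by (rule sum.swap)
  ultimately show ?thesis
    unfolding split Q_def[symmetric] by (simp add: sum.distrib)
qed

lemma estimator_outlier_inner_le_edges:
  fixes f g :: "'n::{finite,linorder} \<times> 'n \<Rightarrow> bool" and Lstar :: "((real, 'n) vec, 'n) vec"
  assumes est: "is_estimator lam1 lam2 \<rho> (sym_of_pairs f) (sym_of_pairs g) Sh Lh" and "lam2 > 0"
    and "\<forall>i j. 0 \<le> Lstar$i$j \<and> Lstar$i$j \<le> \<rho>"
    and edges: "(\<Sum>p\<in>{(i, j). i < j \<and> \<not> (i \<in> I \<and> j \<in> I)}. of_bool (f p \<and> g p)) \<le> c"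
  shows "\<bar>frob_inner
            (\<chi> i j. if i \<in> I \<and> j \<in> I then 0
                    else sym_of_pairs g$i$j * (sym_of_pairs f$i$j - Sh$i$j - Sh$j$i))
            (Lstar - Lh)\<bar> \<le> 2 * \<rho> * c"
proof -
  have "0 \<le> \<rho>" using assms(3) by force
  have A_nonneg: "\<forall>a b. 0 \<le> sym_of_pairs f $a$b"
    by (simp add: sym_of_pairs_def)
  have \<Omega>_01: "\<forall>a b. sym_of_pairs g $a$b \<in> {0, 1}"
    using sym_of_pairs_entries(2) by blast
  from estimator_outlier_inner_le[OF est assms(2) sym_of_pairs_entries(1) sym_of_pairs_entries(1)
      A_nonneg \<Omega>_01 sym_of_pairs_entries(3)[THEN allI] assms(3), of I]
  show ?thesis
    unfolding sum_outlier_entries_sym_of_pairs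
    using mult_left_mono[OF edges, of "2 * \<rho>"] \<open>0 \<le> \<rho>\<close> by simp
qed

lemma sum_pairs_with_outlier_le:
  fixes P :: "((real, 'n::{finite,linorder}) vec, 'n) vec" and I :: "'n set"
  assumes symP: "transpose P = P" and P_nonneg: "\<forall>i j. 0 \<le> P$i$j"
    and row: "\<forall>i. (\<Sum>j\<in>UNIV - I. P$i$j) \<le> c"
  shows "(\<Sum>x\<in>{(i, j). i < j \<and> \<not> (i \<in> I \<and> j \<in> I)}. P $ fst x $ snd x) \<le> 2 * real CARD('n) * c"
proof -
  let ?O = "UNIV - I" and ?P = "\<lambda>x. P $ fst x $ snd x"
  have P_nonneg': "0 \<le> ?P x" for x using P_nonneg by simp
  have "(\<Sum>x\<in>{(i, j). i < j \<and> \<not> (i \<in> I \<and> j \<in> I)}. ?P x) \<le> sum ?P (UNIV \<times> ?O \<union> ?O \<times> UNIV)"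
    by (rule sum_mono2) (auto simp: P_nonneg')
  also have "\<dots> \<le> sum ?P (UNIV \<times> ?O) + sum ?P (?O \<times> UNIV)"
    by (simp add: sum_Un sum_nonneg P_nonneg')
  also have "sum ?P (UNIV \<times> ?O) = (\<Sum>i\<in>UNIV. \<Sum>j\<in>?O. P$i$j)"
    by (simp add: sum.cartesian_product case_prod_unfold)
  also have "sum ?P (?O \<times> UNIV) = sum (?P \<circ> prod.swap) (UNIV \<times> ?O)"
    by (subst product_swap[symmetric]) (rule sum.reindex, simp)
  also have "?P \<circ> prod.swap = ?P"
    using symmetric_matrix_entry[OF symP] by (auto simp: fun_eq_iff)
  also have "sum ?P (UNIV \<times> ?O) = (\<Sum>i\<in>UNIV. \<Sum>j\<in>?O. P$i$j)"
    by (simp add: sum.cartesian_product case_prod_unfold)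
  also have "(\<Sum>i\<in>UNIV. \<Sum>j\<in>?O. P$i$j) \<le> real CARD('n) * c"
    using sum_mono[of UNIV "\<lambda>i. \<Sum>j\<in>?O. P$i$j" "\<lambda>_. c"] row by simp
  finally show ?thesis by (simp add: algebra_simps)
qed

lemma sum_outlier_pairs_weighted_le:
  fixes P M :: "((real, 'n::{finite,linorder}) vec, 'n) vec" and I :: "'n set"
  assumes "transpose P = P" and P_nonneg: "\<forall>i j. 0 \<le> P$i$j"
    and "\<forall>i. (\<Sum>j\<in>UNIV - I. P$i$j) \<le> c"
    and M_le: "\<forall>i j. \<not> (i \<in> I \<and> j \<in> I) \<longrightarrow> M$i$j \<le> b" and "0 \<le> b"
  shows "(\<Sum>x\<in>{(i, j). i < j \<and> \<not> (i \<in> I \<and> j \<in> I)}. M $ fst x $ snd x * P $ fst x $ snd x)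
      \<le> 2 * real CARD('n) * b * c"
proof -
  have "(\<Sum>x\<in>{(i, j). i < j \<and> \<not> (i \<in> I \<and> j \<in> I)}. M $ fst x $ snd x * P $ fst x $ snd x)
      \<le> b * (\<Sum>x\<in>{(i, j). i < j \<and> \<not> (i \<in> I \<and> j \<in> I)}. P $ fst x $ snd x)"
    unfolding sum_distrib_left using M_le P_nonneg by (intro sum_mono mult_right_mono) auto
  also have "\<dots> \<le> b * (2 * real CARD('n) * c)"
    using sum_pairs_with_outlier_le[OF assms(1-3)] \<open>0 \<le> b\<close> by (rule mult_left_mono)
  finally show ?thesis by (simp add: algebra_simps)
qed

definition bern_pairs :: "((real, 'n::{finite,linorder}) vec, 'n) vec \<Rightarrow> ('n \<times> 'n \<Rightarrow> bool) pmf" where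
  "bern_pairs P = Pi_pmf {(i, j). i < j} False (\<lambda>x. bernoulli_pmf (P $ fst x $ snd x))"

lemma sym_bern_eq_map_bern_pairs: "sym_bern P = map_pmf sym_of_pairs (bern_pairs P)"
  unfolding sym_bern_def bern_pairs_def sym_of_pairs_def[abs_def] by (simp add: case_prod_unfold)

lemma nn_integral_pair_Pi_pmf_prod:
  assumes "finite S"
  shows "(\<integral>\<^sup>+x. (\<Prod>p\<in>S. w p (fst x p) (snd x p)) \<partial>pair_pmf (Pi_pmf S d1 P1) (Pi_pmf S d2 P2))
      = (\<Prod>p\<in>S. \<integral>\<^sup>+b. (\<integral>\<^sup>+c. w p b c \<partial>P2 p) \<partial>P1 p)"
proof -
  have "(\<integral>\<^sup>+x. (\<Prod>p\<in>S. w p (fst x p) (snd x p)) \<partial>pair_pmf (Pi_pmf S d1 P1) (Pi_pmf S d2 P2))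
     = (\<integral>\<^sup>+f. (\<integral>\<^sup>+g. (\<Prod>p\<in>S. w p (f p) (g p)) \<partial>Pi_pmf S d2 P2) \<partial>Pi_pmf S d1 P1)"
    by (simp add: nn_integral_pair_pmf')
  also have "\<dots> = (\<integral>\<^sup>+f. (\<Prod>p\<in>S. \<integral>\<^sup>+c. w p (f p) c \<partial>P2 p) \<partial>Pi_pmf S d1 P1)"
    by (intro nn_integral_cong nn_integral_prod_Pi_pmf[OF assms])
  also have "\<dots> = (\<Prod>p\<in>S. \<integral>\<^sup>+b. (\<integral>\<^sup>+c. w p b c \<partial>P2 p) \<partial>P1 p)"
    by (rule nn_integral_prod_Pi_pmf[OF assms])
  finally show ?thesis .
qed

lemma nn_integral_exp_joint_successes:
  fixes p q :: "'a \<Rightarrow> real"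
  assumes fin: "finite S" and QS: "Q \<subseteq> S"
    and p: "\<And>x. 0 \<le> p x \<and> p x \<le> 1" and q: "\<And>x. 0 \<le> q x \<and> q x \<le> 1"
  shows "(\<integral>\<^sup>+fg. ennreal (exp (\<Sum>x\<in>Q. of_bool (fst fg x \<and> snd fg x)))
            \<partial>pair_pmf (Pi_pmf S False (\<lambda>x. bernoulli_pmf (p x))) (Pi_pmf S False (\<lambda>x. bernoulli_pmf (q x))))
       = ennreal (\<Prod>x\<in>Q. 1 + (exp 1 - 1) * (p x * q x))"
proof -
  define w where "w x b c = (if x \<in> Q \<and> b \<and> c then exp 1 else 1 :: real)" for x b c
  define u where "u x = (if x \<in> Q then 1 + (exp 1 - 1) * (p x * q x) else 1)" for x
  have u_nonneg: "0 \<le> u x" for x using p[of x] q[of x] unfolding u_def by simp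
  have exp_eq: "ennreal (exp (\<Sum>x\<in>Q. of_bool (fst fg x \<and> snd fg x)))
      = (\<Prod>x\<in>S. ennreal (w x (fst fg x) (snd fg x)))" for fg :: "('a \<Rightarrow> bool) \<times> ('a \<Rightarrow> bool)"
  proof -
    have restrict: "(\<Sum>x\<in>Q. of_bool (fst fg x \<and> snd fg x))
        = (\<Sum>x\<in>S. if x \<in> Q then of_bool (fst fg x \<and> snd fg x) else 0 :: real)"
      using QS fin by (simp add: sum.If_cases Int_absorb1)
    have "exp (\<Sum>x\<in>Q. of_bool (fst fg x \<and> snd fg x))
        = (\<Prod>x\<in>S. exp (if x \<in> Q then of_bool (fst fg x \<and> snd fg x) else 0) :: real)"
      unfolding restrict by (rule exp_sum[OF fin])
    also have "\<dots> = (\<Prod>x\<in>S. w x (fst fg x) (snd fg x))"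
      by (intro prod.cong) (auto simp: w_def)
    finally show ?thesis by (simp add: prod_ennreal w_def)
  qed
  have factor: "(\<integral>\<^sup>+b. (\<integral>\<^sup>+c. ennreal (w x b c) \<partial>bernoulli_pmf (q x)) \<partial>bernoulli_pmf (p x)) = ennreal (u x)"
    for x
  proof -
    define v where "v b = w x b True * q x + w x b False * (1 - q x)" for b
    have v_nonneg: "0 \<le> v b" for b unfolding v_def w_def using q[of x] by simp
    have "(\<integral>\<^sup>+b. (\<integral>\<^sup>+c. ennreal (w x b c) \<partial>bernoulli_pmf (q x)) \<partial>bernoulli_pmf (p x))
        = (\<integral>\<^sup>+b. ennreal (v b) \<partial>bernoulli_pmf (p x))"
      unfolding v_def w_def using q[of x] by (simp add: ennreal_mult ennreal_plus[symmetric])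
    also have "\<dots> = ennreal (v True * p x + v False * (1 - p x))"
      using p[of x] v_nonneg by (simp add: ennreal_mult ennreal_plus[symmetric])
    also have "v True * p x + v False * (1 - p x) = u x"
      unfolding v_def w_def u_def by (simp add: algebra_simps)
    finally show ?thesis .
  qed
  have "(\<integral>\<^sup>+fg. ennreal (exp (\<Sum>x\<in>Q. of_bool (fst fg x \<and> snd fg x)))
            \<partial>pair_pmf (Pi_pmf S False (\<lambda>x. bernoulli_pmf (p x))) (Pi_pmf S False (\<lambda>x. bernoulli_pmf (q x))))
      = (\<Prod>x\<in>S. \<integral>\<^sup>+b. (\<integral>\<^sup>+c. ennreal (w x b c) \<partial>bernoulli_pmf (q x)) \<partial>bernoulli_pmf (p x))"
    unfolding exp_eq by (rule nn_integral_pair_Pi_pmf_prod[OF fin])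
  also have "\<dots> = ennreal (\<Prod>x\<in>S. u x)"
    by (simp add: factor prod_ennreal u_nonneg)
  also have "(\<Prod>x\<in>S. u x) = (\<Prod>x\<in>Q. 1 + (exp 1 - 1) * (p x * q x))"
    using QS fin by (simp add: u_def prod.If_cases Int_absorb1)
  finally show ?thesis .
qed

lemma prob_joint_successes_ge:
  fixes p q :: "'a \<Rightarrow> real"
  assumes fin: "finite S" and QS: "Q \<subseteq> S"
    and p: "\<And>x. 0 \<le> p x \<and> p x \<le> 1" and q: "\<And>x. 0 \<le> q x \<and> q x \<le> 1"
  shows "measure_pmf.prob
           (pair_pmf (Pi_pmf S False (\<lambda>x. bernoulli_pmf (p x))) (Pi_pmf S False (\<lambda>x. bernoulli_pmf (q x))))
           {fg. t \<le> (\<Sum>x\<in>Q. of_bool (fst fg x \<and> snd fg x))}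
         \<le> exp ((exp 1 - 1) * (\<Sum>x\<in>Q. p x * q x) - t)"
proof -
  let ?M = "pair_pmf (Pi_pmf S False (\<lambda>x. bernoulli_pmf (p x))) (Pi_pmf S False (\<lambda>x. bernoulli_pmf (q x)))"
  let ?h = "\<lambda>fg. (\<Sum>x\<in>Q. of_bool (fst fg x \<and> snd fg x)) :: real"
  have "(\<Prod>x\<in>Q. 1 + (exp 1 - 1) * (p x * q x)) \<le> (\<Prod>x\<in>Q. exp ((exp 1 - 1) * (p x * q x)))"
    using p q by (intro prod_mono conjI exp_ge_add_one_self) (auto intro!: add_nonneg_nonneg)
  also have "\<dots> = exp ((exp 1 - 1) * (\<Sum>x\<in>Q. p x * q x))"
    using QS fin by (simp add: exp_sum[symmetric] finite_subset sum_distrib_left)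
  finally have "exp (- t) * (\<Prod>x\<in>Q. 1 + (exp 1 - 1) * (p x * q x))
      \<le> exp (- t) * exp ((exp 1 - 1) * (\<Sum>x\<in>Q. p x * q x))"
    by simp
  then have mgf_le: "exp (- t) * (\<Prod>x\<in>Q. 1 + (exp 1 - 1) * (p x * q x))
      \<le> exp ((exp 1 - 1) * (\<Sum>x\<in>Q. p x * q x) - t)"
    by (simp flip: exp_add)
  have "emeasure ?M {fg \<in> space ?M. t \<le> ?h fg}
      \<le> ennreal (exp (- 1 * t)) * (\<integral>\<^sup>+fg. ennreal (exp (1 * ?h fg)) * indicator (space ?M) fg \<partial>?M)"
    by (rule Chernoff_ineq_nn_integral_ge) auto
  also have "\<dots> = ennreal (exp (- t) * (\<Prod>x\<in>Q. 1 + (exp 1 - 1) * (p x * q x)))"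
    using nn_integral_exp_joint_successes[OF fin QS p q] p q
    by (simp add: ennreal_mult' prod_nonneg)
  also have "\<dots> \<le> ennreal (exp ((exp 1 - 1) * (\<Sum>x\<in>Q. p x * q x) - t))"
    using mgf_le by (rule ennreal_leI)
  finally show ?thesis
    by (simp add: measure_pmf.emeasure_eq_measure)
qed

lemma prob_joint_successes_less:
  fixes p q :: "'a \<Rightarrow> real"
  assumes "finite S" and "Q \<subseteq> S"
    and p: "\<And>x. 0 \<le> p x \<and> p x \<le> 1" and q: "\<And>x. 0 \<le> q x \<and> q x \<le> 1"
    and mean: "(\<Sum>x\<in>Q. p x * q x) \<le> 4 * a"
  shows "1 - exp (- a) \<le> measure_pmf.prob
           (pair_pmf (Pi_pmf S False (\<lambda>x. bernoulli_pmf (p x))) (Pi_pmf S False (\<lambda>x. bernoulli_pmf (q x))))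
           {fg. (\<Sum>x\<in>Q. of_bool (fst fg x \<and> snd fg x)) < 8 * a}"
proof -
  let ?P = "pair_pmf (Pi_pmf S False (\<lambda>x. bernoulli_pmf (p x))) (Pi_pmf S False (\<lambda>x. bernoulli_pmf (q x)))"
  let ?many = "{fg. 8 * a \<le> (\<Sum>x\<in>Q. of_bool (fst fg x \<and> snd fg x))}"
  have "measure_pmf.prob ?P ?many \<le> exp ((exp 1 - 1) * (\<Sum>x\<in>Q. p x * q x) - 8 * a)"
    by (rule prob_joint_successes_ge) (use assms in auto)
  also have "\<dots> \<le> exp (- a)"
  proof -
    have "(exp 1 - 1) * (\<Sum>x\<in>Q. p x * q x) \<le> (7 / 4) * (4 * a)"
      using mean e_less_272 p q by (intro mult_mono) (auto intro!: sum_nonneg)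
    then show ?thesis by simp
  qed
  finally have "measure_pmf.prob ?P ?many \<le> exp (- a)" .
  moreover have "UNIV - ?many = {fg. (\<Sum>x\<in>Q. of_bool (fst fg x \<and> snd fg x)) < 8 * a}"
    by (auto simp: not_le)
  ultimately show ?thesis
    using measure_pmf.prob_compl[of ?many ?P] by simp
qed

theorem mainTheorem11:
  fixes Iset :: "'n::{finite,linorder} set"
    and Lstar Sstar Pi :: "((real, 'n) vec, 'n) vec"
    and \<rho> \<gamma> \<mu> \<nu> \<nu>t lam1 lam2 :: real
    and k :: nat
  defines "Oset \<equiv> UNIV - Iset"
  defines "s \<equiv> card (UNIV - Iset)"
  defines "n \<equiv> CARD('n)"
  assumes n_ge: "n \<ge> 2"
    and rho: "0 < \<rho>" "\<rho> \<le> 1/2"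
    and gamma: "0 < \<gamma>" "\<gamma> \<le> 1"
    and k: "k \<ge> 1"
    and Lstar_sym: "transpose Lstar = Lstar"
    and Lstar_rank: "rank Lstar = k"
    and Lstar_range: "\<forall>i j. 0 \<le> Lstar$i$j \<and> Lstar$i$j \<le> \<rho>"
    and Lstar_out: "\<forall>i j. i \<in> Oset \<or> j \<in> Oset \<longrightarrow> Lstar$i$j = 0"
    and Sstar_range: "\<forall>i j. 0 \<le> Sstar$i$j \<and> Sstar$i$j \<le> \<gamma>"
    and Sstar_diag: "\<forall>i. Sstar$i$i = 0"
    and Sstar_cols: "\<forall>i j. j \<in> Iset \<longrightarrow> Sstar$i$j = 0"
    and M_range: "\<forall>i j. 0 \<le> Lstar$i$j + Sstar$i$j + Sstar$j$i \<and> Lstar$i$j + Sstar$i$j + Sstar$j$i \<le> 1"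
    and Pi_sym: "transpose Pi = Pi"
    and Pi_diag: "\<forall>i. Pi$i$i = 0"
    and Pi_range: "\<forall>i j. 0 \<le> Pi$i$j \<and> Pi$i$j \<le> 1"
    and A1_mu: "\<mu> > 0" "\<forall>i\<in>Iset. \<forall>j\<in>Iset. i \<noteq> j \<longrightarrow> Pi$i$j \<ge> \<mu>"
    and A1_nu: "0 < \<nu>" "\<nu> \<le> 1" "0 < \<nu>t" "\<nu>t \<le> 1"
    and A1_rowI: "\<forall>i\<in>Iset. (\<Sum>j\<in>Iset. Pi$i$j) \<le> \<nu> * real n"
    and A1_rowO: "\<forall>i. (\<Sum>j\<in>Oset. Pi$i$j) \<le> \<nu>t * real s"
    and A2: "\<nu> * \<rho> \<ge> ln (real n) / real n" "\<nu>t * \<gamma> \<ge> ln (real n) / real n"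
    and A3: "\<nu> * \<rho> * real n \<ge> \<nu>t * \<gamma> * real s"
    and lam: "lam1 > 0" "lam2 > 0"
  shows "measure_pmf.prob
           (pair_pmf (sym_bern (\<chi> i j. Lstar$i$j + Sstar$i$j + Sstar$j$i)) (sym_bern Pi))
           {(A, \<Omega>). \<forall>Sh Lh. is_estimator lam1 lam2 \<rho> A \<Omega> Sh Lh \<longrightarrow>
               \<bar>frob_inner
                  (\<chi> i j. if i \<in> Iset \<and> j \<in> Iset then 0
                          else \<Omega>$i$j * (A$i$j - Sh$i$j - Sh$j$i))
                  (Lstar - Lh)\<bar>
               \<le> 16 * \<nu>t * \<gamma> * \<rho> * real n * real s}
         \<ge> 1 - 2 * exp (- (\<nu>t * \<gamma> * real s * real n))"
proof -
  define Q :: "('n \<times> 'n) set" where "Q = {(i, j). i < j \<and> \<not> (i \<in> Iset \<and> j \<in> Iset)}"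
  define M where "M = (\<chi> i j. Lstar$i$j + Sstar$i$j + Sstar$j$i)"
  define a where "a = \<nu>t * \<gamma> * real s * real n"
  have M_outlier: "\<forall>i j. \<not> (i \<in> Iset \<and> j \<in> Iset) \<longrightarrow> M$i$j \<le> 2 * \<gamma>"
  proof (intro allI impI)
    fix i j
    assume "\<not> (i \<in> Iset \<and> j \<in> Iset)"
    then have "Lstar$i$j = 0" using Lstar_out unfolding Oset_def by auto
    then show "M$i$j \<le> 2 * \<gamma>"
      using Sstar_range[rule_format, of i j] Sstar_range[rule_format, of j i] unfolding M_def by simp
  qed
  have mean: "(\<Sum>x\<in>Q. M $ fst x $ snd x * Pi $ fst x $ snd x) \<le> 4 * a"
    using sum_outlier_pairs_weighted_le[OF Pi_sym _ A1_rowO[unfolded Oset_def] M_outlier] Pi_range gamma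
    unfolding Q_def a_def n_def s_def by (simp add: algebra_simps)
  let ?few = "{fg. (\<Sum>x\<in>Q. of_bool (fst fg x \<and> snd fg x)) < 8 * a}"
  have likely: "1 - exp (- a) \<le> measure_pmf.prob (pair_pmf (bern_pairs M) (bern_pairs Pi)) ?few"
    unfolding bern_pairs_def
    by (rule prob_joint_successes_less[OF _ _ _ _ mean]) (use M_range Pi_range in \<open>auto simp: Q_def M_def\<close>)
  have bound_eq: "2 * \<rho> * (8 * a) = 16 * \<nu>t * \<gamma> * \<rho> * real n * real s"
    unfolding a_def by simp
  show ?thesis
    unfolding M_def[symmetric] sym_bern_eq_map_bern_pairs map_pair[symmetric] measure_map_pmf
  proof (rule order.trans[OF _ measure_pmf.finite_measure_mono])
    show "1 - 2 * exp (- (\<nu>t * \<gamma> * real s * real n))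
        \<le> measure_pmf.prob (pair_pmf (bern_pairs M) (bern_pairs Pi)) ?few"
      using likely exp_gt_zero[of "- a"] unfolding a_def by linarith
  qed (auto simp: Q_def simp del: sum_of_bool_eq
      intro!: estimator_outlier_inner_le_edges[where c = "8 * a" and \<rho> = \<rho>, unfolded bound_eq] lam(2) Lstar_range)
qed

end
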